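(* Let $N\ge 1$ be an integer, $\mu=e^{2\pi i/N}$, and let $(s_1,i_1),\dots,(s_n,i_n)$ be pairs with $s_j$ positive integers and $i_j\in\mathbb{Z}$ ($n\ge 1$). For a positive integer $M$ put, with $i_0:=0$, $$H_M=\sum_{M\ge m_1>m_2>\cdots>m_n\ge 1}\ \prod_{j=1}^n \frac{\mu^{(i_j-i_{j-1})m_j}}{m_j^{s_j}}.$$ Then there exist finitely many positive integers $t_1,\dots,t_r$, complex numbers $a_1,\dots,a_r$, and a number $c\in\mathsf{CMZV}^N_{s_1+\cdots+s_n}$ such that $$H_M=\sum_{j=1}^r a_j(\log M+\gamma)^{t_j}+c+o(1)\qquad (M\to\infty),$$ where $\gamma$ is the Euler–Mascheroni constant.
   Context: For positive integers $s_1,\dots,s_k$ and complex $a_1,\dots,a_k$ define $L_{s_1,\dots,s_k}(a_1,\dots,a_k)=\sum_{n_1>\cdots>n_k\ge1}\frac{a_1^{n_1}\cdots a_k^{n_k}}{n_1^{s_1}\cdots n_k^{s_k}}$. For integers $N\ge1$ and $w\ge1$, $\mathsf{CMZV}^N_w$ denotes the $\mathbb{Q}$-linear span of all values $L_{s_1,\dots,s_k}(a_1,\dots,a_k)$ with $k\ge1$, $s_j$ positive integers with $s_1+\cdots+s_k=w$, each $a_j$ an $N$-th root of unity, and $(s_1,a_1)\neq(1,1)$ (so that the series converges). These are the colored multiple zeta values of weight $w$ and level $N$. *)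

theory Defs
  imports "HOL-Analysis.Analysis"
begin

text \<open>Truncated multiple polylogarithm sum: for a list [(s_1,a_1),...,(s_k,a_k)],
  trunc_L xs M = sum over M >= n_1 > ... > n_k >= 1 of prod a_j^n_j / n_j^s_j.\<close>
fun trunc_L :: "(nat \<times> complex) list \<Rightarrow> nat \<Rightarrow> complex" where
  "trunc_L [] M = 1"
| "trunc_L ((s, a) # xs) M =
     (\<Sum>m\<in>{1..M}. a ^ m / of_nat m ^ s * trunc_L xs (m - 1))"

definition L_val :: "(nat \<times> complex) list \<Rightarrow> complex" where
  "L_val xs = lim (\<lambda>M. trunc_L xs M)"

definition cmzv_index :: "nat \<Rightarrow> nat \<Rightarrow> (nat \<times> complex) list \<Rightarrow> bool" where
  "cmzv_index N w xs \<longleftrightarrow> xs \<noteq> [] \<and> (\<forall>(s, a)\<in>set xs. s \<ge> 1 \<and> a ^ N = 1)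
     \<and> sum_list (map fst xs) = w \<and> hd xs \<noteq> (1, 1)"

definition CMZV :: "nat \<Rightarrow> nat \<Rightarrow> complex set" where
  "CMZV N w = {c. \<exists>S q. finite S \<and> (\<forall>xs\<in>S. cmzv_index N w xs) \<and>
                       c = (\<Sum>xs\<in>S. of_rat (q xs) * L_val xs)}"

fun color_diffs :: "complex \<Rightarrow> int \<Rightarrow> (nat \<times> int) list \<Rightarrow> (nat \<times> complex) list" where
  "color_diffs \<mu> p [] = []"
| "color_diffs \<mu> p ((s, i) # r) = (s, \<mu> powi (i - p)) # color_diffs \<mu> i r"

end

theory Submission
  imports Defs
begin

text \<open>
  If the outermost pair of a word is not (1, 1), its truncated sum T_w(M) converges to the
  colored MZV with error O(1 / sqrt M): absolutely when s \<ge> 2, and by Abel summation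
  against the bounded partial sums of a^m when s = 1 and a \<noteq> 1. Such errors remain
  negligible after multiplication by any polynomial in log M, and
  harm M = log M + \<gamma> + O(1/M).
  The harmonic number harm M is itself the truncated sum of the word (1, 1), and the stuffle
  product gives harm M * T_u(M) = (k + 1) T_{(1,1) u}(M) + \<Sum> T_v(M), where k is the number
  of leading pairs (1, 1) of u and every v has the weight of (1, 1) u but at most k leading
  pairs (1, 1). Induction on the weight, and then on the number of leading pairs (1, 1),
  therefore writes every truncated sum as a polynomial without constant term in
  log M + \<gamma>, plus a rational combination of colored MZVs of the same weight, plus a
  negligible error.
\<close>

lemma ln_power_le_powr:
  fixes \<delta> :: real
  assumes "\<delta> > 0"
  obtains K where "K > 0" "\<And>y. y \<ge> 1 \<Longrightarrow> (2 + ln y) ^ q \<le> K * y powr \<delta>"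
proof
  define e where "e = \<delta> / (q + 1)"
  have e: "e > 0" "q * e \<le> \<delta>"
    using assms by (auto simp: e_def field_simps)
  show "(2 + 1 / e) ^ q > 0"
    using e by (intro zero_less_power add_pos_pos) auto
  fix y :: real
  assume y: "y \<ge> 1"
  have "2 + ln y \<le> (2 + 1 / e) * y powr e"
    using ln_powr_bound[OF y e(1)] ge_one_powr_ge_zero[OF y, of e] e(1)
    by (simp add: algebra_simps)
  then have "(2 + ln y) ^ q \<le> ((2 + 1 / e) * y powr e) ^ q"
    using y by (intro power_mono) auto
  also have "\<dots> = (2 + 1 / e) ^ q * y powr (q * e)"
    using y by (simp add: power_mult_distrib powr_power)
  also have "\<dots> \<le> (2 + 1 / e) ^ q * y powr \<delta>"
    using y e by (intro mult_left_mono powr_mono) auto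
  finally show "(2 + ln y) ^ q \<le> (2 + 1 / e) ^ q * y powr \<delta>" .
qed

lemma harm_le_one_plus_ln: "(harm m :: real) \<le> 1 + ln (real m + 1)"
proof (cases "m = 0")
  case False
  moreover have "harm 1 = (1 :: real)"
    by (simp add: harm_def)
  ultimately have "harm m \<le> 1 + ln (real m)"
    using euler_mascheroni_sequence_decreasing[of 1 m] by simp
  also have "\<dots> \<le> 1 + ln (real m + 1)"
    using False by simp
  finally show ?thesis .
qed (simp add: harm_def)

lemma harm_power_le_sqrt:
  obtains K where "K > 0" "\<And>m. (1 + harm m :: real) ^ k \<le> K * sqrt (real m + 1)"
proof -
  obtain K where K: "K > 0" "\<And>y::real. y \<ge> 1 \<Longrightarrow> (2 + ln y) ^ k \<le> K * y powr (1/2)"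
    using ln_power_le_powr[of "1/2 :: real"] by auto
  have "(1 + harm m :: real) ^ k \<le> K * sqrt (real m + 1)" for m
  proof -
    have "(1 + harm m :: real) ^ k \<le> (2 + ln (real m + 1)) ^ k"
      using harm_le_one_plus_ln[of m] by (intro power_mono) (auto simp: harm_nonneg add_nonneg_nonneg)
    also have "\<dots> \<le> K * sqrt (real m + 1)"
      using K(2)[of "real m + 1"] by (simp add: powr_half_sqrt)
    finally show ?thesis .
  qed
  with K(1) show ?thesis
    using that by blast
qed

lemma ln_power_le_root4:
  obtains K where "K > 0" "\<And>M::nat. (1 + \<bar>ln (real M)\<bar>) ^ q \<le> K * (real M + 1) powr (1/4)"
proof -
  obtain K where K: "K > 0" "\<And>y::real. y \<ge> 1 \<Longrightarrow> (2 + ln y) ^ q \<le> K * y powr (1/4)"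
    using ln_power_le_powr[of "1/4 :: real"] by auto
  have "(1 + \<bar>ln (real M)\<bar>) ^ q \<le> K * (real M + 1) powr (1/4)" for M :: nat
  proof -
    have "\<bar>ln (real M)\<bar> \<le> ln (real M + 1)"
      by (cases "M = 0") auto
    then have "(1 + \<bar>ln (real M)\<bar>) ^ q \<le> (2 + ln (real M + 1)) ^ q"
      by (intro power_mono) auto
    also have "\<dots> \<le> K * (real M + 1) powr (1/4)"
      by (rule K(2)) simp
    finally show ?thesis .
  qed
  with K(1) show ?thesis
    using that by blast
qed

lemma harm_power_le: "m \<le> n \<Longrightarrow> (harm m :: real) ^ k \<le> (1 + harm n) ^ k"
  by (intro power_mono) (auto intro: order_trans[OF harm_mono] harm_nonneg)

lemma one_plus_harm_power_mono: "m \<le> n \<Longrightarrow> (1 + harm m :: real) ^ k \<le> (1 + harm n) ^ k"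
  by (intro power_mono) (auto intro: harm_mono harm_nonneg add_nonneg_nonneg)

lemma filterlim_real_plus_one_sequentially: "filterlim (\<lambda>M. real M + 1) at_top sequentially"
  using filterlim_tendsto_add_at_top[OF tendsto_const filterlim_real_sequentially, of 1]
  by (simp add: add.commute)

section \<open>Sequences negligible against every power of the logarithm\<close>

text \<open>Unlike mere convergence to 0, this is preserved under multiplication by polynomials
  in log M, which is what the regularization needs.\<close>

definition log_negligible :: "(nat \<Rightarrow> 'a::real_normed_vector) \<Rightarrow> bool" where
  "log_negligible e \<longleftrightarrow> (\<forall>q. (\<lambda>M. (1 + \<bar>ln (real M)\<bar>) ^ q * norm (e M)) \<longlonglongrightarrow> 0)"

lemma log_negligible_imp_tendsto_0: "log_negligible e \<Longrightarrow> e \<longlonglongrightarrow> 0"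
  unfolding log_negligible_def by (drule spec[of _ 0]) (simp add: tendsto_norm_zero_iff)

lemma log_negligible_cong: "log_negligible e \<Longrightarrow> (\<And>M. e M = e' M) \<Longrightarrow> log_negligible e'"
  by (metis ext)

lemma log_negligible_if_le_inverse_sqrt:
  assumes "eventually (\<lambda>M. norm (e M) \<le> C / sqrt (real M + 1)) sequentially"
  shows "log_negligible e"
  unfolding log_negligible_def
proof
  fix q
  obtain K where K: "K > 0" "\<And>M::nat. (1 + \<bar>ln (real M)\<bar>) ^ q \<le> K * (real M + 1) powr (1/4)"
    using ln_power_le_root4 by blast
  show "(\<lambda>M. (1 + \<bar>ln (real M)\<bar>) ^ q * norm (e M)) \<longlonglongrightarrow> 0"
  proof (rule Lim_null_comparison)
    show "eventually (\<lambda>M. norm ((1 + \<bar>ln (real M)\<bar>) ^ q * norm (e M))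
        \<le> K * C * (real M + 1) powr (-1/4)) sequentially"
      using assms
    proof eventually_elim
      case (elim M)
      have "norm ((1 + \<bar>ln (real M)\<bar>) ^ q * norm (e M)) = (1 + \<bar>ln (real M)\<bar>) ^ q * norm (e M)"
        by simp
      also have "\<dots> \<le> K * (real M + 1) powr (1/4) * (C / sqrt (real M + 1))"
        using K elim by (intro mult_mono) auto
      also have "\<dots> = K * C * (real M + 1) powr (-1/4)"
        by (simp add: powr_half_sqrt [symmetric] powr_minus_divide field_simps powr_add [symmetric])
      finally show ?case .
    qed
    have "(\<lambda>M. (real M + 1) powr (-1/4)) \<longlonglongrightarrow> 0"
      by (rule tendsto_neg_powr[OF _ filterlim_real_plus_one_sequentially]) simp
    then show "(\<lambda>M. K * C * (real M + 1) powr (-1/4)) \<longlonglongrightarrow> 0"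
      by (rule tendsto_mult_right_zero)
  qed
qed

lemma log_negligible_add:
  assumes "log_negligible e" "log_negligible e'"
  shows "log_negligible (\<lambda>M. e M + e' M)"
  unfolding log_negligible_def
proof
  fix q
  let ?w = "\<lambda>M. (1 + \<bar>ln (real M)\<bar>) ^ q"
  have "(\<lambda>M. ?w M * norm (e M)) \<longlonglongrightarrow> 0" "(\<lambda>M. ?w M * norm (e' M)) \<longlonglongrightarrow> 0"
    using assms unfolding log_negligible_def by blast+
  from tendsto_add[OF this] have lim: "(\<lambda>M. ?w M * norm (e M) + ?w M * norm (e' M)) \<longlonglongrightarrow> 0"
    by simp
  have "norm (?w M * norm (e M + e' M)) \<le> ?w M * norm (e M) + ?w M * norm (e' M)" for M
  proof -
    have "?w M * norm (e M + e' M) \<le> ?w M * (norm (e M) + norm (e' M))"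
      by (intro mult_left_mono norm_triangle_ineq) simp
    then show ?thesis
      by (simp add: distrib_left)
  qed
  then show "(\<lambda>M. ?w M * norm (e M + e' M)) \<longlonglongrightarrow> 0"
    by (rule Lim_null_comparison[OF always_eventually[OF allI] lim])
qed

lemma log_negligible_mult_polylog:
  fixes e f :: "nat \<Rightarrow> 'a::real_normed_div_algebra"
  assumes "log_negligible e" "\<And>M. norm (f M) \<le> C * (1 + \<bar>ln (real M)\<bar>) ^ p"
  shows "log_negligible (\<lambda>M. f M * e M)"
  unfolding log_negligible_def
proof
  fix q
  let ?w = "\<lambda>M. 1 + \<bar>ln (real M)\<bar>"
  have lim: "(\<lambda>M. C * (?w M ^ (q + p) * norm (e M))) \<longlonglongrightarrow> 0"
    using assms(1) unfolding log_negligible_def by (intro tendsto_mult_right_zero) blast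
  have bound: "norm (?w M ^ q * norm (f M * e M)) \<le> C * (?w M ^ (q + p) * norm (e M))" for M
  proof -
    have "norm (?w M ^ q * norm (f M * e M)) = ?w M ^ q * (norm (f M) * norm (e M))"
      by (simp add: norm_mult)
    also have "\<dots> \<le> ?w M ^ q * (C * ?w M ^ p * norm (e M))"
      by (intro mult_left_mono mult_right_mono assms(2)) auto
    finally show ?thesis
      by (simp add: power_add mult_ac)
  qed
  show "(\<lambda>M. ?w M ^ q * norm (f M * e M)) \<longlonglongrightarrow> 0"
    by (rule Lim_null_comparison[OF always_eventually[OF allI[OF bound]] lim])
qed

lemma log_negligible_mult:
  fixes e e' :: "nat \<Rightarrow> 'a::real_normed_div_algebra"
  assumes "log_negligible e" "log_negligible e'"
  shows "log_negligible (\<lambda>M. e M * e' M)"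
proof -
  obtain B where "\<And>M. norm (e M) \<le> B"
    using convergent_imp_Bseq[OF convergentI[OF log_negligible_imp_tendsto_0[OF assms(1)]]]
    by (auto simp: Bseq_def)
  then show ?thesis
    by (intro log_negligible_mult_polylog[OF assms(2), of _ B 0]) auto
qed

lemma dist_lim_le_gauge:
  fixes f R d :: "nat \<Rightarrow> 'a::banach" and g :: "nat \<Rightarrow> real"
  assumes f: "\<And>M. f M = R M + (\<Sum>m=1..M. d m)"
    and R: "\<And>M. norm (R M) \<le> g M"
    and d: "\<And>m. m \<ge> 1 \<Longrightarrow> norm (d m) \<le> g (m - 1) - g m"
    and g: "g \<longlonglongrightarrow> 0"
  shows "convergent f" and "norm (f M - lim f) \<le> 2 * g M"
proof -
  define S where "S M = (\<Sum>m=1..M. d m)" for M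
  have S: "norm (S M' - S M) \<le> g M - g M'" if "M \<le> M'" for M M'
    using that
  proof (induction M' rule: dec_induct)
    case (step n)
    have "S (Suc n) - S M = (S n - S M) + d (Suc n)"
      by (simp add: S_def)
    then have "norm (S (Suc n) - S M) \<le> norm (S n - S M) + norm (d (Suc n))"
      by (metis norm_triangle_ineq)
    then show ?case
      using step.IH d[of "Suc n"] by simp
  qed (simp add: S_def)
  have step: "norm (f M' - f M) \<le> 2 * g M" if "M \<le> M'" for M M'
  proof -
    have "norm (f M' - f M) \<le> norm (R M') + norm (R M) + norm (S M' - S M)"
      using norm_triangle_ineq4[of "R M'" "R M"] norm_triangle_ineq[of "R M' - R M" "S M' - S M"]
      by (simp add: f S_def algebra_simps)
    then show ?thesis
      using R[of M'] R[of M] S[OF that] by simp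
  qed
  have "Cauchy f"
  proof (rule CauchyI)
    fix e :: real
    assume "e > 0"
    then obtain M0 where M0: "4 * g M0 < e"
      using order_tendstoD(2)[OF tendsto_mult_right_zero[OF g, of 4], of e]
      by (auto simp: eventually_sequentially)
    have "norm (f m - f n) < e" if "m \<ge> M0" "n \<ge> M0" for m n
      using norm_triangle_ineq4[of "f m - f M0" "f n - f M0"] step[OF that(1)] step[OF that(2)] M0
      by simp
    then show "\<exists>M0. \<forall>m\<ge>M0. \<forall>n\<ge>M0. norm (f m - f n) < e"
      by blast
  qed
  then show conv: "convergent f"
    by (rule Cauchy_convergent)
  have "(\<lambda>M'. norm (f M' - f M)) \<longlonglongrightarrow> norm (lim f - f M)"
    using conv by (intro tendsto_intros) (simp add: convergent_LIMSEQ_iff)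
  then have "norm (lim f - f M) \<le> 2 * g M"
    by (rule tendsto_upperbound) (use step in \<open>auto simp: eventually_sequentially\<close>)
  then show "norm (f M - lim f) \<le> 2 * g M"
    by (simp add: norm_minus_commute)
qed

lemma inverse_sqrt_diff_ge:
  assumes "m \<ge> 1"
  shows "1 / (2 * sqrt (real m + 1) ^ 3) \<le> 1 / sqrt (real m) - 1 / sqrt (real m + 1)"
proof -
  define a b where "a = sqrt (real m)" and "b = sqrt (real m + 1)"
  have ab: "0 < a" "0 < b" "a \<le> b" "(b - a) * (a + b) = 1"
    using assms by (auto simp: a_def b_def algebra_simps)
  then have "b - a = 1 / (a + b)"
    by (simp add: eq_divide_eq)
  moreover have "1 / a - 1 / b = (b - a) / (a * b)"
    using ab by (simp add: field_simps)
  ultimately have "1 / a - 1 / b = 1 / (a * b * (a + b))"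
    by simp
  also have "\<dots> \<ge> 1 / (b * b * (2 * b))"
    using ab by (intro divide_left_mono mult_mono mult_pos_pos) auto
  finally show ?thesis
    by (simp add: a_def [symmetric] b_def [symmetric] power3_eq_cube mult_ac)
qed

lemma harm_power_div_le_inverse_sqrt:
  obtains K :: real where "K \<ge> 0"
    "\<And>M. M \<ge> 1 \<Longrightarrow> (1 + harm M) ^ k / real M \<le> K / sqrt (real M + 1)"
    "\<And>m. m \<ge> 1 \<Longrightarrow> (1 + harm m) ^ k / real m ^ 2 \<le> K * (1 / sqrt (real m) - 1 / sqrt (real m + 1))"
proof -
  obtain K where K: "K > 0" "\<And>m. (1 + harm m :: real) ^ k \<le> K * sqrt (real m + 1)"
    using harm_power_le_sqrt by blast
  have inv: "1 / real m \<le> 2 / (real m + 1)" "1 / real m ^ 2 \<le> 4 / (real m + 1) ^ 2"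
    if "m \<ge> 1" for m
  proof -
    show *: "1 / real m \<le> 2 / (real m + 1)"
      using that by (simp add: field_simps)
    have "(1 / real m) ^ 2 \<le> (2 / (real m + 1)) ^ 2"
      using that by (intro power_mono *) auto
    then show "1 / real m ^ 2 \<le> 4 / (real m + 1) ^ 2"
      by (simp add: power_divide)
  qed
  have cancel: "K * s * (b / s ^ 2) = b * K / s" "K * s * (b / (s ^ 2) ^ 2) = b * K * (1 / s ^ 3)"
    if "s > 0" for b s :: real
    using that by (simp_all add: field_simps power2_eq_square power3_eq_cube)
  show ?thesis
  proof (rule that[of "8 * K"])
    fix M :: nat
    assume "M \<ge> 1"
    have "(1 + harm M) ^ k / real M \<le> K * sqrt (real M + 1) * (1 / real M)"
      using K(2)[of M] by (simp add: divide_right_mono)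
    also have "\<dots> \<le> K * sqrt (real M + 1) * (2 / (real M + 1))"
      using inv(1)[OF \<open>M \<ge> 1\<close>] K(1) by (intro mult_left_mono) auto
    also have "\<dots> = 2 * K / sqrt (real M + 1)"
      using cancel(1)[of "sqrt (real M + 1)" 2] by simp
    also have "\<dots> \<le> 8 * K / sqrt (real M + 1)"
      using K(1) by (intro divide_right_mono) auto
    finally show "(1 + harm M) ^ k / real M \<le> 8 * K / sqrt (real M + 1)" .
  next
    fix m :: nat
    assume "m \<ge> 1"
    have "(1 + harm m) ^ k / real m ^ 2 \<le> K * sqrt (real m + 1) * (1 / real m ^ 2)"
      using K(2)[of m] by (simp add: divide_right_mono)
    also have "\<dots> \<le> K * sqrt (real m + 1) * (4 / (real m + 1) ^ 2)"
      using inv(2)[OF \<open>m \<ge> 1\<close>] K(1) by (intro mult_left_mono) auto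
    also have "\<dots> = 4 * K * (1 / sqrt (real m + 1) ^ 3)"
      using cancel(2)[of "sqrt (real m + 1)" 4] by simp
    also have "\<dots> \<le> 4 * K * (2 * (1 / sqrt (real m) - 1 / sqrt (real m + 1)))"
      using inverse_sqrt_diff_ge[OF \<open>m \<ge> 1\<close>] K(1) by (intro mult_left_mono) auto
    also have "\<dots> = 8 * K * (1 / sqrt (real m) - 1 / sqrt (real m + 1))"
      by (simp add: algebra_simps)
    finally show "(1 + harm m) ^ k / real m ^ 2 \<le> 8 * K * (1 / sqrt (real m) - 1 / sqrt (real m + 1))" .
  qed (use K(1) in simp)
qed

lemma log_negligible_dist_lim:
  fixes f R d :: "nat \<Rightarrow> 'a::banach"
  assumes f: "\<And>M. f M = R M + (\<Sum>m=1..M. d m)"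
    and R0: "R 0 = 0"
    and R: "\<And>M. M \<ge> 1 \<Longrightarrow> norm (R M) \<le> C * (1 + harm M) ^ k / real M"
    and d: "\<And>m. m \<ge> 1 \<Longrightarrow> norm (d m) \<le> C * (1 + harm m) ^ k / real m ^ 2"
  shows "log_negligible (\<lambda>M. f M - lim f)"
proof -
  obtain K where K: "K \<ge> 0"
    "\<And>M. M \<ge> 1 \<Longrightarrow> (1 + harm M) ^ k / real M \<le> K / sqrt (real M + 1)"
    "\<And>m. m \<ge> 1 \<Longrightarrow> (1 + harm m) ^ k / real m ^ 2 \<le> K * (1 / sqrt (real m) - 1 / sqrt (real m + 1))"
    using harm_power_div_le_inverse_sqrt by blast
  have "C \<ge> 0"
  proof -
    have "0 \<le> C * (1 + harm 1) ^ k"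
      using order_trans[OF norm_ge_zero d[of 1]] by simp
    moreover have "(1 + harm 1 :: real) ^ k > 0"
      by (simp add: harm_nonneg add_pos_nonneg)
    ultimately show ?thesis
      by (meson mult_neg_pos not_le)
  qed
  define g where "g M = C * K / sqrt (real M + 1)" for M
  have "norm (R M) \<le> g M" for M
  proof (cases "M = 0")
    case False
    then have "norm (R M) \<le> C * ((1 + harm M) ^ k / real M)"
      using R by simp
    also have "\<dots> \<le> C * (K / sqrt (real M + 1))"
      using K(2)[of M] False \<open>C \<ge> 0\<close> by (intro mult_left_mono) auto
    also have "\<dots> = g M"
      by (simp add: g_def)
    finally show ?thesis .
  qed (use \<open>C \<ge> 0\<close> K(1) in \<open>simp add: R0 g_def\<close>)
  moreover have "norm (d m) \<le> g (m - 1) - g m" if "m \<ge> 1" for m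
  proof -
    have "norm (d m) \<le> C * ((1 + harm m) ^ k / real m ^ 2)"
      using d[OF that] by simp
    also have "\<dots> \<le> C * (K * (1 / sqrt (real m) - 1 / sqrt (real m + 1)))"
      using K(3)[OF that] \<open>C \<ge> 0\<close> by (rule mult_left_mono)
    also have "\<dots> = g (m - 1) - g m"
      using that by (simp add: g_def of_nat_diff algebra_simps)
    finally show ?thesis .
  qed
  moreover have "g \<longlonglongrightarrow> 0"
    unfolding g_def
    by (intro tendsto_divide_0[OF tendsto_const] filterlim_at_top_imp_at_infinity
        filterlim_compose[OF sqrt_at_top filterlim_real_plus_one_sequentially])
  ultimately have "norm (f M - lim f) \<le> 2 * g M" for M
    by (rule dist_lim_le_gauge(2)[OF f])
  then show ?thesis
    by (intro log_negligible_if_le_inverse_sqrt[of _ "2 * C * K"] always_eventually)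
      (simp add: g_def mult.assoc)
qed

lemma sum_by_parts:
  fixes B b :: "nat \<Rightarrow> 'a::comm_ring"
  shows "(\<Sum>m=1..M. (B m - B (m - 1)) * b m)
    = B M * b M - B 0 * b 0 - (\<Sum>m=1..M. B (m - 1) * (b m - b (m - 1)))"
  by (induction M) (simp_all add: sum.cl_ivl_Suc algebra_simps)

section \<open>Truncated sums of colored multiple polylogarithms\<close>

lemma trunc_L_Cons_Suc:
  "trunc_L ((s, a) # w) (Suc M) = trunc_L ((s, a) # w) M + a ^ Suc M / of_nat (Suc M) ^ s * trunc_L w M"
  by (simp only: trunc_L.simps sum.cl_ivl_Suc) simp

definition unit_disc_index :: "(nat \<times> complex) list \<Rightarrow> bool" where
  "unit_disc_index w \<longleftrightarrow> (\<forall>(s, a)\<in>set w. 1 \<le> s \<and> norm a \<le> 1)"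

lemma unit_disc_index_Cons [simp]:
  "unit_disc_index ((s, a) # w) \<longleftrightarrow> 1 \<le> s \<and> norm a \<le> 1 \<and> unit_disc_index w"
  by (auto simp: unit_disc_index_def)

lemma norm_power_div_power_le:
  fixes a :: complex
  assumes "norm a \<le> 1" "t \<le> s" "m \<ge> 1"
  shows "norm (a ^ m / of_nat m ^ s) \<le> 1 / real m ^ t"
proof -
  have "norm (a ^ m / of_nat m ^ s) \<le> 1 / real m ^ s"
    using assms(1) by (simp add: norm_divide norm_power divide_right_mono power_le_one)
  also have "\<dots> \<le> 1 / real m ^ t"
    using assms(2,3) by (intro divide_left_mono power_increasing) auto
  finally show ?thesis .
qed

lemma norm_trunc_L_le:
  assumes "unit_disc_index w"
  shows "norm (trunc_L w M) \<le> harm M ^ length w"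
  using assms
proof (induction w arbitrary: M)
  case (Cons x w)
  obtain s a where x: "x = (s, a)"
    by (cases x)
  have "norm (trunc_L (x # w) M) \<le> (\<Sum>m=1..M. norm (a ^ m / of_nat m ^ s) * norm (trunc_L w (m - 1)))"
    unfolding x trunc_L.simps norm_mult [symmetric] by (rule norm_sum)
  also have "\<dots> \<le> (\<Sum>m=1..M. 1 / real m * harm M ^ length w)"
  proof (intro sum_mono mult_mono)
    fix m
    assume "m \<in> {1..M}"
    then show "norm (a ^ m / of_nat m ^ s) \<le> 1 / real m"
      using norm_power_div_power_le[of a 1 s m] Cons.prems x by simp
    have "norm (trunc_L w (m - 1)) \<le> harm (m - 1) ^ length w"
      using Cons x by simp
    also have "\<dots> \<le> harm M ^ length w"
      using \<open>m \<in> {1..M}\<close> by (intro power_mono harm_mono harm_nonneg) auto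
    finally show "norm (trunc_L w (m - 1)) \<le> harm M ^ length w" .
  qed auto
  also have "\<dots> = harm M ^ length (x # w)"
    by (simp add: harm_def inverse_eq_divide sum_distrib_right)
  finally show ?case .
qed simp

lemma norm_trunc_L_Suc_diff_le:
  assumes "unit_disc_index w"
  shows "norm (trunc_L w (Suc n) - trunc_L w n) \<le> harm n ^ (length w - 1) / (real n + 1)"
proof (cases w)
  case (Cons x v)
  obtain s a where x: "x = (s, a)"
    by (cases x)
  have "norm (trunc_L w (Suc n) - trunc_L w n) = norm (a ^ Suc n / of_nat (Suc n) ^ s) * norm (trunc_L v n)"
    unfolding Cons x trunc_L_Cons_Suc by (simp only: add_diff_cancel_left' norm_mult)
  also have "\<dots> \<le> 1 / real (Suc n) * harm n ^ length v"
  proof (intro mult_mono)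
    show "norm (a ^ Suc n / of_nat (Suc n) ^ s) \<le> 1 / real (Suc n)"
      using assms Cons x norm_power_div_power_le[of a 1 s "Suc n"] by simp
    show "norm (trunc_L v n) \<le> harm n ^ length v"
      using assms Cons x by (intro norm_trunc_L_le) simp
  qed auto
  finally show ?thesis
    by (simp add: Cons add.commute)
qed simp

lemma norm_div_diff_div_le:
  fixes x y :: "'a::real_normed_field"
  assumes "norm (x - y) \<le> Y / (real p + 1)" "norm y \<le> Y"
  shows "norm (x / of_nat (p + 2) - y / of_nat (p + 1)) \<le> 4 * Y / (real p + 2) ^ 2"
proof -
  have split: "x / of_nat (p + 2) - y / of_nat (p + 1)
      = (x - y) / of_nat (p + 2) + y * of_real (1 / real (p + 2) - 1 / real (p + 1))"
  proof -
    have "(1 / of_nat (p + 2) - 1 / of_nat (p + 1) :: 'a) = of_real (1 / real (p + 2) - 1 / real (p + 1))"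
      by simp
    then show ?thesis
      by (simp add: diff_divide_distrib algebra_simps)
  qed
  have first: "norm ((x - y) / of_nat (p + 2)) \<le> Y / ((real p + 1) * (real p + 2))"
  proof -
    have "norm (x - y) / real (p + 2) \<le> Y / (real p + 1) / real (p + 2)"
      using assms(1) by (rule divide_right_mono) simp
    then show ?thesis
      unfolding norm_divide norm_of_nat by (simp add: add.commute)
  qed
  have second: "norm (y * of_real (1 / real (p + 2) - 1 / real (p + 1))) \<le> Y / ((real p + 1) * (real p + 2))"
  proof -
    have "\<bar>1 / real (p + 2) - 1 / real (p + 1)\<bar> = 1 / ((real p + 1) * (real p + 2))"
      by (simp add: field_simps)
    with assms(2) show ?thesis
      unfolding norm_mult norm_of_real by (simp add: divide_right_mono)
  qed
  have "norm (x / of_nat (p + 2) - y / of_nat (p + 1)) \<le> 2 * Y / ((real p + 1) * (real p + 2))"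
    unfolding split using add_mono[OF first second] by (intro norm_triangle_le) simp
  also have "\<dots> \<le> 4 * Y / (real p + 2) ^ 2"
  proof -
    have "2 / ((real p + 1) * (real p + 2)) \<le> 4 / (real p + 2) ^ 2"
      by (simp add: divide_simps power2_eq_square algebra_simps)
    moreover have "Y \<ge> 0"
      using assms(2) norm_ge_zero order_trans by blast
    ultimately have "Y * (2 / ((real p + 1) * (real p + 2))) \<le> Y * (4 / (real p + 2) ^ 2)"
      by (rule mult_left_mono)
    then show ?thesis
      by (simp add: ac_simps)
  qed
  finally show ?thesis .
qed

lemma norm_trunc_L_div_diff_le:
  assumes "unit_disc_index w"
  shows "norm (trunc_L w n / of_nat (Suc n) - trunc_L w (n - 1) / of_nat n)
    \<le> 4 * (1 + harm n) ^ length w / (real n + 1) ^ 2"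
proof (cases n)
  case 0
  have "norm (trunc_L w 0) \<le> 1"
    using norm_trunc_L_le[OF assms, of 0] by (cases "length w") (simp_all add: harm_def)
  then show ?thesis
    using 0 by (simp add: harm_def)
next
  case (Suc p)
  have harm_le: "harm p ^ j \<le> (1 + harm n :: real) ^ length w" if "j \<le> length w" for j
  proof -
    have "harm p ^ j \<le> (1 + harm n :: real) ^ j"
      using Suc by (intro harm_power_le) simp
    also have "\<dots> \<le> (1 + harm n) ^ length w"
      using that by (intro power_increasing) (auto simp: harm_nonneg)
    finally show ?thesis .
  qed
  have "norm (trunc_L w (Suc p) - trunc_L w p) \<le> (1 + harm n) ^ length w / (real p + 1)"
    by (rule order_trans[OF norm_trunc_L_Suc_diff_le[OF assms] divide_right_mono[OF harm_le]]) auto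
  moreover have "norm (trunc_L w p) \<le> (1 + harm n) ^ length w"
    using norm_trunc_L_le[OF assms, of p] harm_le[of "length w"] by simp
  ultimately show ?thesis
    using norm_div_diff_div_le[of "trunc_L w (Suc p)" "trunc_L w p"] Suc
    by (simp add: add.commute)
qed

lemma log_negligible_trunc_L_minus_lim_if_two_le:
  assumes "unit_disc_index ((s, a) # w)" "s \<ge> 2"
  shows "log_negligible (\<lambda>M. trunc_L ((s, a) # w) M - lim (trunc_L ((s, a) # w)))"
proof (rule log_negligible_dist_lim[where R = "\<lambda>_. 0" and C = 1 and k = "length w"])
  fix m :: nat
  assume "m \<ge> 1"
  have "norm (a ^ m / of_nat m ^ s * trunc_L w (m - 1)) \<le> 1 / real m ^ 2 * harm (m - 1) ^ length w"
    unfolding norm_mult using \<open>m \<ge> 1\<close> assms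
    by (intro mult_mono norm_power_div_power_le norm_trunc_L_le) auto
  also have "\<dots> \<le> 1 / real m ^ 2 * (1 + harm m) ^ length w"
    by (intro mult_left_mono harm_power_le) auto
  finally show "norm (a ^ m / of_nat m ^ s * trunc_L w (m - 1)) \<le> 1 * (1 + harm m) ^ length w / real m ^ 2"
    by simp
qed (auto simp: harm_nonneg add_nonneg_nonneg)

text \<open>Abel summation with \<open>a ^ (m + 1) / (a - 1)\<close>, whose differences are \<open>a ^ m\<close> and which
  stays bounded when \<open>norm a \<le> 1\<close>; the boundary term at \<open>m = 0\<close> vanishes by division by zero.\<close>

lemma trunc_L_Cons_one_by_parts:
  assumes "a \<noteq> 1"
  shows "trunc_L ((1, a) # w) M = a ^ (M + 1) / (a - 1) * (trunc_L w (M - 1) / of_nat M)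
    + (\<Sum>m=1..M. - (a ^ m / (a - 1) * (trunc_L w (m - 1) / of_nat m - trunc_L w (m - 2) / of_nat (m - 1))))"
proof -
  define B where "B m = a ^ (m + 1) / (a - 1)" for m
  define b where "b m = trunc_L w (m - 1) / of_nat m" for m
  have "B m - B (m - 1) = a ^ m" if "m \<ge> 1" for m
  proof -
    obtain n where m: "m = Suc n"
      using \<open>m \<ge> 1\<close> not0_implies_Suc by fastforce
    have "B m - B (m - 1) = a ^ m * (a - 1) / (a - 1)"
      unfolding B_def m by (simp add: diff_divide_distrib [symmetric] algebra_simps)
    then show ?thesis
      using assms by simp
  qed
  then have "trunc_L ((1, a) # w) M = (\<Sum>m=1..M. (B m - B (m - 1)) * b m)"
    by (simp add: b_def)
  also have "\<dots> = B M * b M + (\<Sum>m=1..M. - (B (m - 1) * (b m - b (m - 1))))"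
    using sum_by_parts[of B b M] by (simp add: b_def [of 0] sum_negf)
  also have "\<dots> = a ^ (M + 1) / (a - 1) * (trunc_L w (M - 1) / of_nat M)
    + (\<Sum>m=1..M. - (a ^ m / (a - 1) * (trunc_L w (m - 1) / of_nat m - trunc_L w (m - 2) / of_nat (m - 1))))"
    by (intro arg_cong2[of _ _ _ _ "(+)"] sum.cong) (auto simp: B_def b_def numeral_2_eq_2)
  finally show ?thesis .
qed

lemma log_negligible_trunc_L_minus_lim_if_ne_one:
  assumes "unit_disc_index ((1, a) # w)" "a \<noteq> 1"
  shows "log_negligible (\<lambda>M. trunc_L ((1, a) # w) M - lim (trunc_L ((1, a) # w)))"
proof -
  have norm_B: "norm (a ^ m / (a - 1)) \<le> 1 / norm (a - 1)" for m
    unfolding norm_divide norm_power using assms(1) by (intro divide_right_mono power_le_one) auto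
  have w: "unit_disc_index w"
    using assms(1) by simp
  show ?thesis
  proof (rule log_negligible_dist_lim[OF trunc_L_Cons_one_by_parts[OF assms(2)],
        where C = "4 / norm (a - 1)" and k = "length w"])
    fix M :: nat
    assume "M \<ge> 1"
    have "norm (a ^ (M + 1) / (a - 1) * (trunc_L w (M - 1) / of_nat M))
        = norm (a ^ (M + 1) / (a - 1)) * (norm (trunc_L w (M - 1)) / real M)"
      by (simp only: norm_mult norm_divide norm_of_nat)
    also have "\<dots> \<le> 1 / norm (a - 1) * (harm (M - 1) ^ length w / real M)"
      by (intro mult_mono norm_B divide_right_mono norm_trunc_L_le w) auto
    also have "\<dots> \<le> 1 / norm (a - 1) * (4 * (1 + harm M) ^ length w / real M)"
    proof -
      have "0 \<le> (1 + harm M :: real) ^ length w"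
        by (simp add: harm_nonneg add_nonneg_nonneg)
      then show ?thesis
        using harm_power_le[of "M - 1" M "length w"] by (intro mult_left_mono divide_right_mono) auto
    qed
    finally show "norm (a ^ (M + 1) / (a - 1) * (trunc_L w (M - 1) / of_nat M))
        \<le> 4 / norm (a - 1) * (1 + harm M) ^ length w / real M"
      by simp
  next
    fix m :: nat
    assume "m \<ge> 1"
    have "norm (- (a ^ m / (a - 1) * (trunc_L w (m - 1) / of_nat m - trunc_L w (m - 2) / of_nat (m - 1))))
        \<le> 1 / norm (a - 1) * (4 * (1 + harm (m - 1)) ^ length w / (real (m - 1) + 1) ^ 2)"
      unfolding norm_minus_cancel norm_mult
      using norm_trunc_L_div_diff_le[OF w, of "m - 1"] \<open>m \<ge> 1\<close>
      by (intro mult_mono norm_B) (auto simp: numeral_2_eq_2)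
    also have "\<dots> = 1 / norm (a - 1) * (4 * (1 + harm (m - 1)) ^ length w / real m ^ 2)"
      using \<open>m \<ge> 1\<close> by (simp add: of_nat_diff)
    also have "\<dots> \<le> 1 / norm (a - 1) * (4 * (1 + harm m) ^ length w / real m ^ 2)"
      by (intro mult_left_mono divide_right_mono mult_left_mono one_plus_harm_power_mono) auto
    finally show "norm (- (a ^ m / (a - 1) * (trunc_L w (m - 1) / of_nat m - trunc_L w (m - 2) / of_nat (m - 1))))
        \<le> 4 / norm (a - 1) * (1 + harm m) ^ length w / real m ^ 2"
      by simp
  qed simp
qed

lemma log_negligible_trunc_L_minus_L_val:
  assumes "unit_disc_index ((s, a) # w)" "(s, a) \<noteq> (1, 1)"
  shows "log_negligible (\<lambda>M. trunc_L ((s, a) # w) M - L_val ((s, a) # w))"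
  unfolding L_val_def
proof (cases "s \<ge> 2")
  case True
  then show "log_negligible (\<lambda>M. trunc_L ((s, a) # w) M - lim (trunc_L ((s, a) # w)))"
    by (rule log_negligible_trunc_L_minus_lim_if_two_le[OF assms(1)])
next
  case False
  with assms have "s = 1" "a \<noteq> 1"
    by auto
  with log_negligible_trunc_L_minus_lim_if_ne_one[of a w] assms(1)
  show "log_negligible (\<lambda>M. trunc_L ((s, a) # w) M - lim (trunc_L ((s, a) # w)))"
    by (simp del: trunc_L.simps)
qed

lemma zero_in_CMZV: "0 \<in> CMZV N w"
  unfolding CMZV_def by (intro CollectI exI[of _ "{}"]) auto

lemma L_val_in_CMZV: "cmzv_index N w xs \<Longrightarrow> L_val xs \<in> CMZV N w"
  unfolding CMZV_def by (intro CollectI exI[of _ "{xs}"] exI[of _ "\<lambda>_. 1"]) auto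

lemma CMZV_mult_rat:
  assumes "c \<in> CMZV N w"
  shows "of_rat r * c \<in> CMZV N w"
proof -
  obtain S q where S: "finite S" "\<forall>xs\<in>S. cmzv_index N w xs" "c = (\<Sum>xs\<in>S. of_rat (q xs) * L_val xs)"
    using assms unfolding CMZV_def by blast
  have "of_rat r * c = (\<Sum>xs\<in>S. of_rat (r * q xs) * L_val xs)"
    unfolding S(3) by (simp add: sum_distrib_left of_rat_mult mult_ac)
  with S(1,2) show ?thesis
    unfolding CMZV_def by (intro CollectI exI[of _ S] exI[of _ "\<lambda>xs. r * q xs"]) auto
qed

lemma CMZV_add:
  assumes "c \<in> CMZV N w" "c' \<in> CMZV N w"
  shows "c + c' \<in> CMZV N w"
proof -
  obtain S q where S: "finite S" "\<forall>xs\<in>S. cmzv_index N w xs" "c = (\<Sum>xs\<in>S. of_rat (q xs) * L_val xs)"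
    using assms(1) unfolding CMZV_def by blast
  obtain S' q' where S': "finite S'" "\<forall>xs\<in>S'. cmzv_index N w xs"
      "c' = (\<Sum>xs\<in>S'. of_rat (q' xs) * L_val xs)"
    using assms(2) unfolding CMZV_def by blast
  define Q where "Q xs = (if xs \<in> S then q xs else 0) + (if xs \<in> S' then q' xs else 0)" for xs
  have "c = (\<Sum>xs\<in>S \<union> S'. of_rat (if xs \<in> S then q xs else 0) * L_val xs)"
    unfolding S(3) using S(1) S'(1) by (intro sum.mono_neutral_cong_left) auto
  moreover have "c' = (\<Sum>xs\<in>S \<union> S'. of_rat (if xs \<in> S' then q' xs else 0) * L_val xs)"
    unfolding S'(3) using S(1) S'(1) by (intro sum.mono_neutral_cong_left) auto
  ultimately have "c + c' = (\<Sum>xs\<in>S \<union> S'. of_rat (Q xs) * L_val xs)"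
    by (simp add: Q_def sum.distrib [symmetric] of_rat_add distrib_right)
  with S(1,2) S'(1,2) show ?thesis
    unfolding CMZV_def by (intro CollectI exI[of _ "S \<union> S'"] exI[of _ Q]) auto
qed

definition harm_approx :: "nat \<Rightarrow> complex" where
  "harm_approx M = of_real (ln (real M)) + euler_mascheroni"

lemma abs_harm_minus_ln_le:
  assumes "M \<ge> 1"
  shows "\<bar>harm M - ln (real M) - euler_mascheroni\<bar> \<le> 1 / real M"
proof -
  have "euler_mascheroni \<in> {harm M - ln (real M + 1) + 1 / (2 * (real M + 1)) ..
      harm M - ln (real M + 1) + 1 / (2 * real M)}"
    using euler_mascheroni_bounds[OF assms] by (simp add: inverse_eq_divide add.commute)
  moreover have "0 \<le> ln (real M + 1) - ln (real M)" "ln (real M + 1) - ln (real M) \<le> 1 / real M"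
    using assms ln_diff_le_inverse[of "real M"] by auto
  moreover have "0 \<le> 1 / (2 * (real M + 1))" "1 / (2 * real M) \<le> 1 / real M"
    using assms by (auto simp: field_simps)
  ultimately show ?thesis
    unfolding abs_le_iff atLeastAtMost_iff by linarith
qed

lemma log_negligible_harm_minus_approx: "log_negligible (\<lambda>M. harm M - harm_approx M)"
proof (rule log_negligible_if_le_inverse_sqrt[of _ 2])
  show "eventually (\<lambda>M. norm (harm M - harm_approx M) \<le> 2 / sqrt (real M + 1)) sequentially"
    using eventually_ge_at_top[of 1]
  proof eventually_elim
    case (elim M)
    have "harm M - harm_approx M = of_real (harm M - ln (real M) - euler_mascheroni)"
      by (simp add: harm_approx_def of_real_harm)
    then have "norm (harm M - harm_approx M) = \<bar>harm M - ln (real M) - euler_mascheroni\<bar>"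
      by (simp only: norm_of_real)
    also have "\<dots> \<le> 1 / real M"
      by (rule abs_harm_minus_ln_le[OF elim])
    also have "\<dots> \<le> 2 / sqrt (real M + 1)"
    proof -
      have "sqrt (real M + 1) \<le> real M + 1"
        by (rule real_sqrt_le_iff'[THEN iffD2]) (auto simp: power2_eq_square)
      with elim show ?thesis
        by (simp add: field_simps)
    qed
    finally show ?case .
  qed
qed

lemma norm_harm_approx_le: "norm (harm_approx M) \<le> 1 + \<bar>ln (real M)\<bar>"
proof -
  have eq: "harm_approx M = of_real (ln (real M) + euler_mascheroni)"
    by (simp add: harm_approx_def)
  show ?thesis
    using abs_triangle_ineq[of "ln (real M)" euler_mascheroni] euler_mascheroni_pos
      euler_mascheroni_less_13_over_22
    unfolding eq norm_of_real by linarith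
qed

lemma norm_poly_le:
  fixes x :: "'a::real_normed_field"
  assumes "norm x \<le> L" "1 \<le> L"
  shows "norm (poly p x) \<le> (\<Sum>i\<le>degree p. norm (coeff p i)) * L ^ degree p"
proof -
  have "norm (poly p x) \<le> (\<Sum>i\<le>degree p. norm (coeff p i * x ^ i))"
    unfolding poly_altdef by (rule norm_sum)
  also have "\<dots> \<le> (\<Sum>i\<le>degree p. norm (coeff p i) * L ^ degree p)"
  proof (rule sum_mono)
    fix i
    assume "i \<in> {..degree p}"
    then have "norm x ^ i \<le> L ^ degree p"
      using assms by (intro order_trans[OF power_mono power_increasing]) auto
    then show "norm (coeff p i * x ^ i) \<le> norm (coeff p i) * L ^ degree p"
      by (simp add: norm_mult norm_power mult_left_mono)
  qed
  finally show ?thesis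
    by (simp add: sum_distrib_right)
qed

definition regularizable :: "nat \<Rightarrow> nat \<Rightarrow> (nat \<Rightarrow> complex) \<Rightarrow> bool" where
  "regularizable N w f \<longleftrightarrow> (\<exists>p c. coeff p 0 = 0 \<and> c \<in> CMZV N w \<and>
     log_negligible (\<lambda>M. f M - poly p (harm_approx M) - c))"

lemma regularizable_add:
  assumes "regularizable N w f" "regularizable N w g"
  shows "regularizable N w (\<lambda>M. f M + g M)"
proof -
  obtain p c where p: "coeff p 0 = 0" "c \<in> CMZV N w"
      "log_negligible (\<lambda>M. f M - poly p (harm_approx M) - c)"
    using assms(1) unfolding regularizable_def by blast
  obtain q c' where q: "coeff q 0 = 0" "c' \<in> CMZV N w"
      "log_negligible (\<lambda>M. g M - poly q (harm_approx M) - c')"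
    using assms(2) unfolding regularizable_def by blast
  have "log_negligible (\<lambda>M. (f M + g M) - poly (p + q) (harm_approx M) - (c + c'))"
    using log_negligible_add[OF p(3) q(3)] by (rule log_negligible_cong) (simp add: algebra_simps)
  with p q CMZV_add[OF p(2) q(2)] show ?thesis
    unfolding regularizable_def by (intro exI[of _ "p + q"] exI[of _ "c + c'"]) auto
qed

lemma regularizable_mult_rat:
  assumes "regularizable N w f"
  shows "regularizable N w (\<lambda>M. of_rat r * f M)"
proof -
  obtain p c where p: "coeff p 0 = 0" "c \<in> CMZV N w"
      "log_negligible (\<lambda>M. f M - poly p (harm_approx M) - c)"
    using assms unfolding regularizable_def by blast
  have "log_negligible (\<lambda>M. of_rat r * f M - poly (smult (of_rat r) p) (harm_approx M) - of_rat r * c)"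
    using log_negligible_mult_polylog[OF p(3), of "\<lambda>_. of_rat r" "norm (of_rat r :: complex)" 0]
    by (rule log_negligible_cong) (simp_all add: algebra_simps)
  with p CMZV_mult_rat[OF p(2)] show ?thesis
    unfolding regularizable_def by (intro exI[of _ "smult (of_rat r) p"] exI[of _ "of_rat r * c"]) auto
qed

lemma regularizable_sum_list:
  assumes "\<And>r. r \<in> set rs \<Longrightarrow> regularizable N w (g r)"
  shows "regularizable N w (\<lambda>M. \<Sum>r\<leftarrow>rs. g r M)"
  using assms
proof (induction rs)
  case Nil
  have "log_negligible (\<lambda>M. 0 - poly 0 (harm_approx M) - 0 :: complex)"
    by (rule log_negligible_if_le_inverse_sqrt[of _ 0]) simp
  with zero_in_CMZV show ?case
    unfolding regularizable_def by (intro exI[of _ 0] exI[of _ 0]) auto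
next
  case (Cons r rs)
  then show ?case
    using regularizable_add[of N w "g r" "\<lambda>M. \<Sum>r\<leftarrow>rs. g r M"] by simp
qed

lemma regularizable_harm: "regularizable N w harm"
proof -
  have "log_negligible (\<lambda>M. harm M - poly [:0, 1:] (harm_approx M) - 0)"
    using log_negligible_harm_minus_approx by simp
  with zero_in_CMZV show ?thesis
    unfolding regularizable_def by (intro exI[of _ "[:0, 1:]"] exI[of _ 0]) auto
qed

lemma regularizable_harm_mult:
  assumes "regularizable N w' f"
  shows "regularizable N w (\<lambda>M. harm M * f M)"
proof -
  obtain p c where p: "coeff p 0 = 0" "c \<in> CMZV N w'"
      "log_negligible (\<lambda>M. f M - poly p (harm_approx M) - c)"
    using assms unfolding regularizable_def by blast
  define e where "e M = f M - poly p (harm_approx M) - c" for M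
  define \<epsilon> where "\<epsilon> M = harm M - harm_approx M" for M
  have e: "log_negligible e" and \<epsilon>: "log_negligible \<epsilon>"
    using p(3) log_negligible_harm_minus_approx by (simp_all add: e_def [abs_def] \<epsilon>_def [abs_def])
  define C where "C = (\<Sum>i\<le>degree p. norm (coeff p i)) + norm c"
  have "norm (poly p (harm_approx M) + c) \<le> C * (1 + \<bar>ln (real M)\<bar>) ^ degree p" for M
  proof -
    have c_le: "norm c \<le> norm c * (1 + \<bar>ln (real M)\<bar>) ^ degree p"
      using mult_left_mono[of 1 "(1 + \<bar>ln (real M)\<bar>) ^ degree p" "norm c"] by simp
    have "norm (poly p (harm_approx M) + c) \<le> norm (poly p (harm_approx M)) + norm c"
      by (rule norm_triangle_ineq)
    also have "\<dots> \<le> (\<Sum>i\<le>degree p. norm (coeff p i)) * (1 + \<bar>ln (real M)\<bar>) ^ degree p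
        + norm c * (1 + \<bar>ln (real M)\<bar>) ^ degree p"
      using c_le by (intro add_mono norm_poly_le norm_harm_approx_le) auto
    finally show ?thesis
      by (simp add: C_def distrib_right)
  qed
  then have "log_negligible (\<lambda>M. (poly p (harm_approx M) + c) * \<epsilon> M)"
    by (rule log_negligible_mult_polylog[OF \<epsilon>])
  moreover have "log_negligible (\<lambda>M. harm_approx M * e M)"
    using norm_harm_approx_le by (intro log_negligible_mult_polylog[OF e, of _ 1 1]) simp
  ultimately have "log_negligible
      (\<lambda>M. (poly p (harm_approx M) + c) * \<epsilon> M + harm_approx M * e M + \<epsilon> M * e M)"
    using log_negligible_mult[OF \<epsilon> e] by (intro log_negligible_add)
  then have "log_negligible (\<lambda>M. harm M * f M - poly (pCons 0 (p + [:c:])) (harm_approx M) - 0)"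
    by (rule log_negligible_cong) (simp add: e_def \<epsilon>_def algebra_simps)
  with zero_in_CMZV show ?thesis
    unfolding regularizable_def by (intro exI[of _ "pCons 0 (p + [:c:])"] exI[of _ 0]) auto
qed

section \<open>Stuffle with the harmonic numbers\<close>

lemma trunc_L_one_one: "trunc_L [(1, 1)] = harm"
  by (simp add: fun_eq_iff harm_def inverse_eq_divide)

lemma harm_mult_trunc_L_Cons:
  "harm M * trunc_L ((s, a) # v) M = trunc_L ((1, 1) # (s, a) # v) M + trunc_L ((Suc s, a) # v) M
     + (\<Sum>m=1..M. a ^ m / of_nat m ^ s * (harm (m - 1) * trunc_L v (m - 1)))"
proof (induction M)
  case (Suc M)
  define A where "A = a ^ Suc M / of_nat (Suc M) ^ s"
  define n where "n = (of_nat (Suc M) :: complex)"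
  have "n \<noteq> 0"
    unfolding n_def by (rule of_nat_neq_0)
  have h: "harm (Suc M) = harm M + 1 / n"
    by (simp add: harm_Suc n_def inverse_eq_divide)
  have t1: "trunc_L ((s, a) # v) (Suc M) = trunc_L ((s, a) # v) M + A * trunc_L v M"
    by (simp add: trunc_L_Cons_Suc A_def)
  have t2: "trunc_L ((1, 1) # (s, a) # v) (Suc M)
      = trunc_L ((1, 1) # (s, a) # v) M + 1 / n * trunc_L ((s, a) # v) M"
    by (simp only: trunc_L_Cons_Suc n_def) simp
  have t3: "trunc_L ((Suc s, a) # v) (Suc M) = trunc_L ((Suc s, a) # v) M + A / n * trunc_L v M"
    by (simp only: trunc_L_Cons_Suc A_def n_def) (simp add: field_simps)
  have t4: "(\<Sum>m=1..Suc M. a ^ m / of_nat m ^ s * (harm (m - 1) * trunc_L v (m - 1)))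
      = (\<Sum>m=1..M. a ^ m / of_nat m ^ s * (harm (m - 1) * trunc_L v (m - 1))) + A * (harm M * trunc_L v M)"
    by (simp add: sum.cl_ivl_Suc A_def)
  show ?case
    unfolding h t1 t2 t3 t4 using Suc.IH \<open>n \<noteq> 0\<close> by (simp add: algebra_simps add_divide_distrib)
qed simp

definition leading_ones :: "(nat \<times> complex) list \<Rightarrow> nat" where
  "leading_ones w = length (takeWhile (\<lambda>x. x = (1, 1)) w)"

lemma leading_ones_Nil [simp]: "leading_ones [] = 0"
  by (simp add: leading_ones_def)

lemma leading_ones_Cons_one_one [simp]: "leading_ones ((Suc 0, 1) # w) = Suc (leading_ones w)"
  by (simp add: leading_ones_def)

lemma leading_ones_Cons [simp]: "x \<noteq> (1, 1) \<Longrightarrow> leading_ones (x # w) = 0"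
  by (simp add: leading_ones_def)

text \<open>The words of the stuffle product of (1, 1) with u, listed with multiplicity, except the
  \<open>leading_ones u + 1\<close> copies of \<open>(1, 1) # u\<close>.\<close>

fun harm_stuffle_rest :: "(nat \<times> complex) list \<Rightarrow> (nat \<times> complex) list list" where
  "harm_stuffle_rest [] = []"
| "harm_stuffle_rest ((s, a) # v) =
    (if (s, a) = (1, 1) then ((2, 1) # v) # map ((#) (1, 1)) (harm_stuffle_rest v)
     else ((Suc s, a) # v) # map ((#) (s, a))
       (replicate (Suc (leading_ones v)) ((1, 1) # v) @ harm_stuffle_rest v))"

lemma sum_list_trunc_L_Cons:
  "(\<Sum>r\<leftarrow>rs. trunc_L ((s, a) # r) M) = (\<Sum>m=1..M. a ^ m / of_nat m ^ s * (\<Sum>r\<leftarrow>rs. trunc_L r (m - 1)))"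
  by (induction rs) (simp_all add: sum.distrib distrib_left)

lemma harm_mult_trunc_L:
  "harm M * trunc_L u M
    = of_nat (Suc (leading_ones u)) * trunc_L ((1, 1) # u) M + (\<Sum>r\<leftarrow>harm_stuffle_rest u. trunc_L r M)"
proof (induction u arbitrary: M)
  case Nil
  then show ?case
    using fun_cong[OF trunc_L_one_one, of M] by simp
next
  case (Cons x v)
  obtain s a where x: "x = (s, a)"
    by (cases x)
  have inner: "(\<Sum>m=1..M. a ^ m / of_nat m ^ s * (harm (m - 1) * trunc_L v (m - 1)))
      = of_nat (Suc (leading_ones v)) * trunc_L ((s, a) # (1, 1) # v) M
        + (\<Sum>r\<leftarrow>harm_stuffle_rest v. trunc_L ((s, a) # r) M)"
    unfolding Cons.IH sum_list_trunc_L_Cons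
    by (simp add: sum.distrib distrib_left sum_distrib_left mult_ac)
  show ?case
  proof (cases "(s, a) = (1, 1)")
    case True
    then show ?thesis
      unfolding x harm_mult_trunc_L_Cons inner
      by (simp add: o_def algebra_simps numeral_2_eq_2 del: trunc_L.simps)
  next
    case False
    then show ?thesis
      unfolding x harm_mult_trunc_L_Cons inner harm_stuffle_rest.simps if_not_P[OF False]
        leading_ones_Cons[OF False]
      by (simp add: o_def algebra_simps sum_list_replicate map_replicate del: trunc_L.simps)
  qed
qed

abbreviation weight :: "(nat \<times> complex) list \<Rightarrow> nat" where
  "weight w \<equiv> sum_list (map fst w)"

definition root_index :: "nat \<Rightarrow> (nat \<times> complex) list \<Rightarrow> bool" where
  "root_index N w \<longleftrightarrow> (\<forall>(s, a)\<in>set w. 1 \<le> s \<and> a ^ N = 1)"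

lemma root_index_Nil [simp]: "root_index N []"
  by (simp add: root_index_def)

lemma root_index_Cons [simp]: "root_index N ((s, a) # w) \<longleftrightarrow> 1 \<le> s \<and> a ^ N = 1 \<and> root_index N w"
  by (auto simp: root_index_def)

lemma unit_disc_index_if_root_index: "N \<ge> 1 \<Longrightarrow> root_index N w \<Longrightarrow> unit_disc_index w"
  unfolding root_index_def unit_disc_index_def using power_eq_1_iff by fastforce

lemma harm_stuffle_rest_properties:
  assumes "r \<in> set (harm_stuffle_rest u)" "root_index N u"
  shows "root_index N r" "weight r = Suc (weight u)" "leading_ones r \<le> leading_ones u"
  using assms
proof (induction u arbitrary: r)
  case (Cons x v)
  obtain s a where x: "x = (s, a)"
    by (cases x)
  {
    case 1
    then show ?case
      using Cons.IH(1) x by (auto split: if_splits)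
  next
    case 2
    then show ?case
      using Cons.IH(2) x by (auto split: if_splits)
  next
    case 3
    then show ?case
      using Cons.IH(3) x by (auto split: if_splits)
  }
qed simp_all

lemma regularizable_trunc_L_if_not_one_one:
  assumes "N \<ge> 1" "root_index N ((s, a) # u)" "(s, a) \<noteq> (1, 1)"
  shows "regularizable N (weight ((s, a) # u)) (trunc_L ((s, a) # u))"
proof -
  have "log_negligible (\<lambda>M. trunc_L ((s, a) # u) M - L_val ((s, a) # u))"
    using unit_disc_index_if_root_index[OF assms(1,2)] assms(3) by (rule log_negligible_trunc_L_minus_L_val)
  moreover have "cmzv_index N (weight ((s, a) # u)) ((s, a) # u)"
    using assms(2,3) unfolding cmzv_index_def root_index_def by auto
  ultimately show ?thesis
    unfolding regularizable_def using L_val_in_CMZV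
    by (intro exI[of _ 0] exI[of _ "L_val ((s, a) # u)"]) auto
qed

lemma regularizable_trunc_L_one_one_Cons:
  assumes "regularizable N w (\<lambda>M. harm M * trunc_L u M)"
    and "\<And>r. r \<in> set (harm_stuffle_rest u) \<Longrightarrow> regularizable N w (trunc_L r)"
  shows "regularizable N w (trunc_L ((1, 1) # u))"
proof -
  have "regularizable N w (\<lambda>M. \<Sum>r\<leftarrow>harm_stuffle_rest u. trunc_L r M)"
    using assms(2) by (rule regularizable_sum_list)
  then have "regularizable N w (\<lambda>M. of_rat (1 / of_nat (Suc (leading_ones u)))
      * (harm M * trunc_L u M + of_rat (-1) * (\<Sum>r\<leftarrow>harm_stuffle_rest u. trunc_L r M)))"
    by (intro regularizable_mult_rat regularizable_add assms(1))
  moreover have "trunc_L ((1, 1) # u) = (\<lambda>M. of_rat (1 / of_nat (Suc (leading_ones u)))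
      * (harm M * trunc_L u M + of_rat (-1) * (\<Sum>r\<leftarrow>harm_stuffle_rest u. trunc_L r M)))"
    using harm_mult_trunc_L[of _ u] by (simp add: fun_eq_iff of_rat_divide field_simps del: of_nat_Suc)
  ultimately show ?thesis
    by (simp only:)
qed

lemma regularizable_trunc_L:
  assumes "N \<ge> 1" "root_index N w" "w \<noteq> []"
  shows "regularizable N (weight w) (trunc_L w)"
  using wf_measures[of "[weight, leading_ones]"] assms(2,3)
proof (induction w rule: wf_induct_rule)
  case (less w)
  obtain s a u where w: "w = (s, a) # u"
    using less.prems(2) by (metis list.exhaust surj_pair)
  show ?case
  proof (cases "(s, a) = (1, 1)")
    case False
    then show ?thesis
      using regularizable_trunc_L_if_not_one_one[OF assms(1)] less.prems(1) by (simp only: w)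
  next
    case True
    then have u: "root_index N u" "weight w = Suc (weight u)" "leading_ones w = Suc (leading_ones u)"
      using less.prems(1) by (auto simp: w)
    have "regularizable N (weight w) (\<lambda>M. harm M * trunc_L u M)"
    proof (cases "u = []")
      case True
      then show ?thesis
        using regularizable_harm by simp
    next
      case False
      then show ?thesis
        using less.IH[of u] u by (intro regularizable_harm_mult) simp
    qed
    moreover have "regularizable N (weight w) (trunc_L r)" if "r \<in> set (harm_stuffle_rest u)" for r
      using less.IH[of r] harm_stuffle_rest_properties[OF that u(1)] u by fastforce
    moreover have "trunc_L w = trunc_L ((1, 1) # u)"
      using True by (simp add: w)
    ultimately show ?thesis
      using regularizable_trunc_L_one_one_Cons by metis
  qed
qed

lemma weight_color_diffs: "weight (color_diffs \<mu> p ps) = sum_list (map fst ps)"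
  by (induction ps arbitrary: p) auto

lemma root_index_color_diffs:
  assumes "\<forall>(s, i)\<in>set ps. s \<ge> 1" "\<mu> ^ N = 1"
  shows "root_index N (color_diffs \<mu> p ps)"
  using assms(1)
proof (induction ps arbitrary: p)
  case (Cons x ps)
  obtain s i where x: "x = (s, i)"
    by (cases x)
  have "(\<mu> powi (i - p)) ^ N = (\<mu> ^ N) powi (i - p)"
    by (simp add: power_int_power [symmetric] power_int_power' mult.commute)
  with Cons x assms(2) show ?case
    by simp
qed simp

lemma poly_eq_sum_if_coeff_0:
  fixes p :: "'a::comm_semiring_1 poly"
  assumes "coeff p 0 = 0"
  shows "poly p x = (\<Sum>j<degree p. coeff p (Suc j) * x ^ Suc j)"
proof -
  have "poly p x = (\<Sum>i<Suc (degree p). coeff p i * x ^ i)"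
    unfolding poly_altdef lessThan_Suc_atMost ..
  also have "\<dots> = coeff p 0 * x ^ 0 + (\<Sum>j<degree p. coeff p (Suc j) * x ^ Suc j)"
    by (rule sum.lessThan_Suc_shift)
  finally show ?thesis
    using assms by simp
qed

theorem proposition2p3:
  fixes N :: nat and ps :: "(nat \<times> int) list"
  assumes "N \<ge> 1"
    and "ps \<noteq> []"
    and "\<forall>(s, i)\<in>set ps. s \<ge> 1"
  defines "\<mu> \<equiv> exp (2 * of_real pi * \<i> / of_nat N)"
  defines "H \<equiv> (\<lambda>M. trunc_L (color_diffs \<mu> 0 ps) M)"
  shows "\<exists>(r::nat) (t::nat \<Rightarrow> nat) (a::nat \<Rightarrow> complex) c.
           (\<forall>j<r. t j \<ge> 1) \<and> c \<in> CMZV N (sum_list (map fst ps)) \<and>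
           (\<lambda>M. H M - ((\<Sum>j<r. a j * (of_real (ln (real M)) + euler_mascheroni) ^ t j) + c))
              \<longlonglongrightarrow> 0"
proof -
  have "\<mu> ^ N = 1"
    using complex_root_unity[of N 1] assms(1) by (simp add: \<mu>_def)
  moreover have "color_diffs \<mu> 0 ps \<noteq> []"
    using assms(2) by (cases ps) auto
  ultimately have "regularizable N (sum_list (map fst ps)) H"
    using regularizable_trunc_L[OF assms(1) root_index_color_diffs[OF assms(3)]]
    by (simp add: H_def weight_color_diffs)
  then obtain p c where p: "coeff p 0 = 0" "c \<in> CMZV N (sum_list (map fst ps))"
      "log_negligible (\<lambda>M. H M - poly p (harm_approx M) - c)"
    unfolding regularizable_def by blast
  have "(\<lambda>M. H M - ((\<Sum>j<degree p. coeff p (Suc j) * harm_approx M ^ Suc j) + c)) \<longlonglongrightarrow> 0"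
    using log_negligible_imp_tendsto_0[OF p(3)] by (simp add: poly_eq_sum_if_coeff_0[OF p(1)] algebra_simps)
  with p(2) show ?thesis
    unfolding harm_approx_def by (intro exI[of _ "degree p"] exI[of _ Suc] exI conjI) auto
qed

end
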